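(* For every polynomial $F$ with real coefficients and every sufficiently large integer $N$, there exists a completely multiplicative function $f=f_{F,N}:\mathbb{N}\to\mathbb{C}$ with $|f(n)|\le1$ for all $n$ such that $$\left|\sum_{1\le n\le N}f(n)e(F(n))\right|\ge\frac1{10}\frac N{\log N}.$$
   Context: $e(x)=\exp(2\pi ix)$. A function is completely multiplicative if $f(1)=1$ and $f(mn)=f(m)f(n)$ for all $m,n$. *)

theory Defs
  imports "HOL-Analysis.Analysis" "HOL-Computational_Algebra.Polynomial"
begin

definition e :: "real \<Rightarrow> complex" where
  "e x = exp (2 * of_real pi * \<i> * of_real x)"

definition completely_multiplicative :: "(nat \<Rightarrow> complex) \<Rightarrow> bool" where
  "completely_multiplicative f \<longleftrightarrow>
     f 1 = 1 \<and> (\<forall>m n. m > 0 \<longrightarrow> n > 0 \<longrightarrow> f (m * n) = f m * f n)"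

end

theory Submission
  imports Defs "HOL-Number_Theory.Pocklington" "HOL-Real_Asymp.Real_Asymp"
begin

text \<open>Put \<open>f(p) = conj (e (F p))\<close> for the primes \<open>p > \<surd>N\<close> and \<open>f(p) = 0\<close> for the primes
  \<open>p \<le> \<surd>N\<close>. Every composite \<open>n \<le> N\<close> has a prime factor \<open>\<le> \<surd>N\<close>, so \<open>f(n) e(F n)\<close> is \<open>1\<close>
  on the primes in \<open>(\<surd>N, N]\<close> and \<open>0\<close> on all other \<open>2 \<le> n \<le> N\<close>. The sum is thus \<open>e(F 1)\<close>
  plus the number of these primes, which is at least \<open>\<pi>(N) - \<surd>N\<close>. Chebyshev's bound
  \<open>\<pi>(N) log N \<ge> N/2 - O(log N)\<close>, which follows from \<open>4^n/(2n) \<le> (2n choose n) \<le> (2n)^\<pi>(2n)\<close>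
  and Legendre's formula, then beats \<open>N / (10 log N)\<close>.\<close>

lemma exponent_less_power:
  fixes p k :: nat
  assumes "1 < p"
  shows "k < p ^ k"
proof -
  have "k < 2 ^ k" by (rule less_exp)
  also have "\<dots> \<le> p ^ k" using assms by (intro power_mono) auto
  finally show ?thesis .
qed

lemma multiplicity_le_self:
  fixes p n :: nat
  assumes "1 < p" "0 < n"
  shows "multiplicity p n \<le> n"
proof -
  have "p ^ multiplicity p n dvd n" by (rule multiplicity_dvd)
  hence "p ^ multiplicity p n \<le> n" using assms(2) by (rule dvd_imp_le)
  thus ?thesis using exponent_less_power[OF assms(1), of "multiplicity p n"] by linarith
qed

lemma multiplicity_eq_card_dividing_powers:
  fixes p n m :: nat
  assumes "1 < p" "0 < n" "multiplicity p n \<le> m"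
  shows "multiplicity p n = card {j\<in>{1..m}. p ^ j dvd n}"
proof -
  have "{j\<in>{1..m}. p ^ j dvd n} = {1..multiplicity p n}"
    using assms by (auto simp: power_dvd_iff_le_multiplicity)
  thus ?thesis by simp
qed

theorem legendre_multiplicity_fact:
  fixes p n :: nat
  assumes "prime p"
  shows "multiplicity p (fact n) = (\<Sum>j=1..n. n div p ^ j)"
proof (induction n)
  case 0
  show ?case by simp
next
  case (Suc n)
  have p1: "1 < p" using assms by (rule prime_gt_1_nat)
  have "n div p ^ Suc n = 0" using exponent_less_power[OF p1, of "Suc n"] by simp
  hence IH: "multiplicity p (fact n) = (\<Sum>j=1..Suc n. n div p ^ j)"
    using Suc.IH by simp
  have "multiplicity p (Suc n) = card {j\<in>{1..Suc n}. p ^ j dvd Suc n}"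
    using p1 by (intro multiplicity_eq_card_dividing_powers multiplicity_le_self) auto
  also have "\<dots> = (\<Sum>j=1..Suc n. if p ^ j dvd Suc n then 1 else 0)"
    unfolding card_eq_sum by (rule sum.inter_filter) simp
  finally have mult_Suc: "multiplicity p (Suc n) = \<dots>" .
  have "multiplicity p (fact (Suc n) :: nat) = multiplicity p (Suc n * fact n :: nat)"
    by simp
  also have "\<dots> = multiplicity p (Suc n) + multiplicity p (fact n :: nat)"
    using assms by (intro prime_elem_multiplicity_mult_distrib) (auto simp: fact_nonzero)
  also have "\<dots> = (\<Sum>j=1..Suc n. n div p ^ j + (if p ^ j dvd Suc n then 1 else 0))"
    by (simp add: mult_Suc IH sum.distrib)
  also have "\<dots> = (\<Sum>j=1..Suc n. Suc n div p ^ j)"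
    using p1 by (intro sum.cong refl) (simp add: div_Suc dvd_eq_mod_eq_0)
  finally show ?case .
qed

lemma double_div_le:
  fixes n d :: nat
  assumes "0 < d"
  shows "2 * n div d \<le> 2 * (n div d) + (if d \<le> 2 * n then 1 else 0)"
proof -
  have "2 * n < 2 * (n div d * d) + 2 * d"
    using div_mult_mod_eq[of n d] mod_less_divisor[OF assms, of n] by linarith
  hence "2 * n < (2 * (n div d) + 2) * d" by (simp add: algebra_simps)
  hence "2 * n div d < 2 * (n div d) + 2" using assms by (simp add: div_less_iff_less_mult)
  moreover have "2 * n div d = 0" if "\<not> d \<le> 2 * n" using that by simp
  ultimately show ?thesis by auto
qed

text \<open>By Legendre, the multiplicity of \<open>p\<close> in \<open>2n choose n\<close> is
  \<open>\<Sum>j. \<lfloor>2n/p^j\<rfloor> - 2\<lfloor>n/p^j\<rfloor>\<close>, a sum of terms in \<open>{0,1}\<close> vanishing once \<open>p^j > 2n\<close>.\<close>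

lemma prime_power_multiplicity_central_binomial_le:
  fixes p n :: nat
  assumes p: "prime p" and n: "0 < n"
  shows "p ^ multiplicity p (2 * n choose n) \<le> 2 * n"
proof -
  define v where "v = multiplicity p (2 * n choose n)"
  define K where "K = {j\<in>{1..2*n}. p ^ j \<le> 2 * n}"
  have p1: "1 < p" using p by (rule prime_gt_1_nat)
  have "fact (2 * n) = (2 * n choose n) * (fact n * fact n :: nat)"
    using binomial_fact_lemma[of n "2 * n"] by (simp add: mult_ac)
  hence "multiplicity p (fact (2 * n) :: nat) = v + 2 * multiplicity p (fact n :: nat)"
    using p by (simp add: v_def prime_elem_multiplicity_mult_distrib fact_nonzero)
  hence split: "(\<Sum>j=1..2*n. 2 * n div p ^ j) = v + 2 * (\<Sum>j=1..n. n div p ^ j)"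
    by (simp add: legendre_multiplicity_fact[OF p])
  have "(\<Sum>j=1..n. n div p ^ j) = (\<Sum>j=1..2*n. n div p ^ j)"
  proof (rule sum.mono_neutral_left)
    show "\<forall>j\<in>{1..2*n} - {1..n}. n div p ^ j = 0"
    proof
      fix j assume "j \<in> {1..2*n} - {1..n}"
      hence "n < p ^ j" using exponent_less_power[OF p1, of j] by auto
      thus "n div p ^ j = 0" by simp
    qed
  qed auto
  moreover have "(\<Sum>j=1..2*n. 2 * n div p ^ j)
      \<le> (\<Sum>j=1..2*n. 2 * (n div p ^ j) + (if p ^ j \<le> 2 * n then 1 else 0))"
    using p1 by (intro sum_mono double_div_le) simp
  moreover have "(\<Sum>j=1..2*n. if p ^ j \<le> 2 * n then 1 else 0) = card K"
    unfolding K_def card_eq_sum by (rule sum.inter_filter[symmetric]) simp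
  ultimately have "v \<le> card K" using split by (simp add: sum.distrib sum_distrib_left)
  show ?thesis
  proof (rule ccontr)
    assume "\<not> ?thesis"
    hence large: "2 * n < p ^ v" by (simp add: v_def)
    have "K \<subseteq> {1..<v}"
    proof
      fix j assume "j \<in> K"
      hence "1 \<le> j" "p ^ j < p ^ v" using large by (auto simp: K_def)
      thus "j \<in> {1..<v}" using p1 power_less_imp_less_exp by auto
    qed
    hence "card K < v" using card_mono[of "{1..<v}" K] large n by (cases v) auto
    with \<open>v \<le> card K\<close> show False by simp
  qed
qed

definition prime_counting :: "nat \<Rightarrow> nat" where
  "prime_counting x = card {p. prime p \<and> p \<le> x}"

lemma finite_primes_le: "finite {p::nat. prime p \<and> p \<le> x}"
  by (rule finite_subset[of _ "{..x}"]) auto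

lemma prime_counting_mono:
  assumes "x \<le> y"
  shows "prime_counting x \<le> prime_counting y"
  unfolding prime_counting_def using assms by (intro card_mono finite_primes_le) auto

lemma central_binomial_le_power_prime_counting:
  fixes n :: nat
  assumes n: "0 < n"
  shows "2 * n choose n \<le> (2 * n) ^ prime_counting (2 * n)"
proof -
  define C where "C = 2 * n choose n"
  have C: "0 < C" by (simp add: C_def)
  have factors_le: "p ^ multiplicity p C \<le> 2 * n" if "p \<in> prime_factors C" for p
    using prime_power_multiplicity_central_binomial_le[OF _ n, of p] that
    by (simp add: C_def in_prime_factors_imp_prime)
  have "prime_factors C \<subseteq> {p. prime p \<and> p \<le> 2 * n}"
  proof
    fix p assume p: "p \<in> prime_factors C"
    hence "prime p" "0 < multiplicity p C" by (auto simp: prime_factors_multiplicity)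
    hence "p \<le> p ^ multiplicity p C" by (intro self_le_power) (auto dest: prime_gt_0_nat)
    with factors_le[OF p] \<open>prime p\<close> show "p \<in> {p. prime p \<and> p \<le> 2 * n}" by auto
  qed
  hence card_factors: "card (prime_factors C) \<le> prime_counting (2 * n)"
    unfolding prime_counting_def by (intro card_mono finite_primes_le)
  have "C = (\<Prod>p\<in>prime_factors C. p ^ multiplicity p C)" by (rule prime_factorization_nat[OF C])
  also have "\<dots> \<le> (\<Prod>p\<in>prime_factors C. 2 * n)" by (intro prod_mono) (simp add: factors_le)
  also have "\<dots> = (2 * n) ^ card (prime_factors C)" by simp
  also have "\<dots> \<le> (2 * n) ^ prime_counting (2 * n)"
    using card_factors n by (intro power_increasing) auto
  finally show ?thesis by (simp add: C_def)
qed

lemma prime_counting_lower_bound: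
  fixes N :: nat
  assumes N: "2 \<le> N"
  shows "(real N - 1) / 2 - ln (real N) \<le> real (prime_counting N) * ln (real N)"
proof -
  define m where "m = N div 2"
  have m: "0 < m" "2 * m \<le> N" "real N - 1 \<le> 2 * real m" using N by (auto simp: m_def)
  have "4 ^ m / (2 * real m) \<le> real (2 * m choose m)" by (rule central_binomial_lower_bound[OF m(1)])
  also have "\<dots> \<le> (2 * real m) ^ prime_counting (2 * m)"
    using central_binomial_le_power_prime_counting[OF m(1)] of_nat_le_iff
    by (metis of_nat_mult of_nat_numeral of_nat_power)
  finally have "ln (4 ^ m / (2 * real m)) \<le> ln ((2 * real m) ^ prime_counting (2 * m))"
    using m(1) by simp
  moreover have "ln (4 ^ m / (2 * real m)) = real m * ln 4 - ln (2 * real m)"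
    using m(1) by (simp add: ln_div ln_realpow)
  moreover have "ln ((2 * real m) ^ prime_counting (2 * m)) = real (prime_counting (2 * m)) * ln (2 * real m)"
    by (rule ln_realpow)
  ultimately have cheb: "real m * ln 4 - ln (2 * real m) \<le> real (prime_counting (2 * m)) * ln (2 * real m)"
    by simp
  have "1 \<le> ln (4::real)" using exp_le by (simp add: ln_ge_iff)
  hence "(real N - 1) / 2 \<le> real m * ln 4" using m(3) mult_left_mono[of 1 "ln 4" "real m"] by simp
  moreover have ln_le: "0 \<le> ln (2 * real m)" "ln (2 * real m) \<le> ln (real N)" using m by simp_all
  moreover have "real (prime_counting (2 * m)) * ln (2 * real m) \<le> real (prime_counting N) * ln (real N)"
    using prime_counting_mono[OF m(2)] ln_le by (intro mult_mono) auto
  ultimately show ?thesis using cheb by linarith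
qed

lemma prime_counting_le_card_large_primes:
  fixes N :: nat
  shows "real (prime_counting N) - sqrt (real N) \<le> real (card {p. prime p \<and> p \<le> N \<and> N < p * p})"
proof -
  define P where "P = {p. prime p \<and> p \<le> N \<and> N < p * p}"
  define k where "k = nat \<lfloor>sqrt (real N)\<rfloor>"
  have "{p. prime p \<and> p \<le> N} \<subseteq> P \<union> {1..k}"
  proof
    fix p assume p: "p \<in> {p. prime p \<and> p \<le> N}"
    have "p \<le> k" if "\<not> N < p * p"
    proof -
      have "real p ^ 2 \<le> real N" using that by (simp add: power2_eq_square flip: of_nat_mult)
      hence "real p \<le> sqrt (real N)" by (rule real_le_rsqrt)
      thus ?thesis by (simp add: k_def le_nat_floor)
    qed
    with p show "p \<in> P \<union> {1..k}" using prime_ge_1_nat by (auto simp: P_def)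
  qed
  hence "prime_counting N \<le> card (P \<union> {1..k})"
    unfolding prime_counting_def by (intro card_mono) (auto simp: P_def)
  also have "\<dots> \<le> card P + k" using card_Un_le[of P "{1..k}"] by simp
  finally have "real (prime_counting N) \<le> real (card P) + real k" by linarith
  moreover have "real k \<le> sqrt (real N)" by (simp add: k_def)
  ultimately show ?thesis by (simp add: P_def)
qed

definition cm_extension :: "(nat \<Rightarrow> complex) \<Rightarrow> nat \<Rightarrow> complex" where
  "cm_extension g n = (\<Prod>p\<in>#prime_factorization n. g p)"

lemma completely_multiplicative_cm_extension: "completely_multiplicative (cm_extension g)"
  unfolding completely_multiplicative_def cm_extension_def by (simp add: prime_factorization_mult)

lemma cm_extension_prime: "prime p \<Longrightarrow> cm_extension g p = g p"
  by (simp add: cm_extension_def prime_factorization_prime)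

lemma cm_extension_eq_0:
  assumes "prime q" "q dvd n" "0 < n" "g q = 0"
  shows "cm_extension g n = 0"
proof -
  have "q \<in># prime_factorization n" using assms by (auto simp: in_prime_factors_iff)
  thus ?thesis using assms(4) by (auto simp: cm_extension_def prod_mset_zero_iff)
qed

lemma norm_cm_extension_le:
  assumes "\<And>p. prime p \<Longrightarrow> norm (g p) \<le> 1"
  shows "norm (cm_extension g n) \<le> 1"
proof -
  have "\<forall>p\<in>#M. prime p \<Longrightarrow> norm (\<Prod>p\<in>#M. g p) \<le> 1" for M
    using assms by (induction M) (auto simp: norm_mult intro!: mult_le_one)
  thus ?thesis by (simp add: cm_extension_def in_prime_factors_imp_prime)
qed

lemma cm_extension_large_primes_term:
  fixes a :: "nat \<Rightarrow> complex"
  assumes a: "\<And>n. norm (a n) = 1" and n: "2 \<le> n" "n \<le> N"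
  defines "f \<equiv> cm_extension (\<lambda>p. if N < p * p then cnj (a p) else 0)"
  shows "f n * a n = (if prime n \<and> N < n * n then 1 else 0)"
proof (cases "prime n \<and> N < n * n")
  case True
  hence "f n * a n = cnj (a n) * a n" by (simp add: f_def cm_extension_prime)
  also have "\<dots> = 1" using a[of n] complex_norm_square[of "a n"] by (simp add: mult.commute)
  finally show ?thesis using True by simp
next
  case False
  obtain q where q: "prime q" "q dvd n" "q * q \<le> N"
  proof (cases "prime n")
    case True
    thus thesis using False that[of n] by auto
  next
    case False
    then obtain q where "prime q" "q dvd n" "q\<^sup>2 \<le> n"
      using n prime_prime_factor_sqrt[of n] by auto
    thus thesis using that[of q] n by (simp add: power2_eq_square)
  qed
  hence "f n = 0" using n unfolding f_def by (intro cm_extension_eq_0[OF q(1,2)]) auto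
  thus ?thesis using False by simp
qed

lemma exists_completely_multiplicative_sum_ge_card_large_primes:
  fixes a :: "nat \<Rightarrow> complex" and N :: nat
  assumes a: "\<And>n. norm (a n) = 1" and N: "0 < N"
  shows "\<exists>f. completely_multiplicative f \<and> (\<forall>n>0. norm (f n) \<le> 1) \<and>
           real (card {p. prime p \<and> p \<le> N \<and> N < p * p}) - 1 \<le> norm (\<Sum>n=1..N. f n * a n)"
proof -
  define f where "f = cm_extension (\<lambda>p. if N < p * p then cnj (a p) else 0)"
  define P where "P = {p. prime p \<and> p \<le> N \<and> N < p * p}"
  have f1: "f 1 = 1"
    using completely_multiplicative_cm_extension by (simp add: f_def completely_multiplicative_def)
  have "(\<Sum>n=1..N. f n * a n) = f 1 * a 1 + (\<Sum>n=2..N. f n * a n)"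
    using N by (simp add: sum.atLeast_Suc_atMost numeral_2_eq_2)
  also have "(\<Sum>n=2..N. f n * a n) = (\<Sum>n=2..N. if prime n \<and> N < n * n then 1 else 0)"
    using a unfolding f_def by (intro sum.cong refl cm_extension_large_primes_term) auto
  also have "\<dots> = of_nat (card P)"
    unfolding P_def using prime_ge_2_nat
    by (simp add: sum.inter_filter[symmetric]) (intro arg_cong[where f = card] Collect_cong, auto)
  finally have "of_nat (card P) = (\<Sum>n=1..N. f n * a n) - a 1" using f1 by simp
  hence "real (card P) \<le> norm (\<Sum>n=1..N. f n * a n) + norm (a 1)"
    by (metis norm_of_nat norm_triangle_ineq4)
  moreover have "norm (f n) \<le> 1" for n
    unfolding f_def using a by (intro norm_cm_extension_le) simp
  ultimately show ?thesis using a[of 1] completely_multiplicative_cm_extension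
    by (intro exI[of _ f]) (simp add: P_def f_def)
qed

lemma eventually_prime_counting_minus_sqrt_ge:
  "\<exists>N0::nat. \<forall>N\<ge>N0. (1/10) * (real N / ln (real N)) \<le> real (prime_counting N) - sqrt (real N) - 1"
proof -
  have "eventually (\<lambda>x::real. x / 10 \<le> (x - 1) / 2 - ln x - (sqrt x + 1) * ln x) at_top"
    by real_asymp
  then obtain X where X: "\<And>x. x \<ge> X \<Longrightarrow> x / 10 \<le> (x - 1) / 2 - ln x - (sqrt x + 1) * ln x"
    by (auto simp: eventually_at_top_linorder)
  have "(1/10) * (real N / ln (real N)) \<le> real (prime_counting N) - sqrt (real N) - 1"
    if N: "max 2 (nat \<lceil>X\<rceil>) \<le> N" for N
  proof -
    have "X \<le> real N" using N real_nat_ceiling_ge[of X] by linarith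
    hence "real N / 10 \<le> (real (prime_counting N) - sqrt (real N) - 1) * ln (real N)"
      using X[of "real N"] prime_counting_lower_bound[of N] N by (simp add: algebra_simps)
    moreover have "0 < ln (real N)" using N by simp
    ultimately show ?thesis by (simp add: pos_divide_le_eq)
  qed
  thus ?thesis by blast
qed

theorem mainTheorem17:
  fixes F :: "real poly"
  shows "\<exists>N0::nat. \<forall>N\<ge>N0. \<exists>f :: nat \<Rightarrow> complex.
           completely_multiplicative f \<and> (\<forall>n>0. norm (f n) \<le> 1) \<and>
           norm (\<Sum>n=1..N. f n * e (poly F (real n))) \<ge> (1/10) * (real N / ln (real N))"
proof -
  obtain N0 where N0: "\<And>N. N \<ge> N0 \<Longrightarrow>
      (1/10) * (real N / ln (real N)) \<le> real (prime_counting N) - sqrt (real N) - 1"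
    using eventually_prime_counting_minus_sqrt_ge by blast
  have "\<exists>f. completely_multiplicative f \<and> (\<forall>n>0. norm (f n) \<le> 1) \<and>
           norm (\<Sum>n=1..N. f n * e (poly F (real n))) \<ge> (1/10) * (real N / ln (real N))"
    if N: "max 1 N0 \<le> N" for N
  proof -
    have "norm (e x) = 1" for x by (simp add: e_def)
    then obtain f where "completely_multiplicative f" "\<forall>n>0. norm (f n) \<le> 1"
      "real (card {p. prime p \<and> p \<le> N \<and> N < p * p}) - 1 \<le> norm (\<Sum>n=1..N. f n * e (poly F (real n)))"
      using exists_completely_multiplicative_sum_ge_card_large_primes[of "\<lambda>n. e (poly F (real n))" N] N
      by auto
    thus ?thesis using N0[of N] prime_counting_le_card_large_primes[of N] N by (intro exI[of _ f]) auto
  qed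
  thus ?thesis by blast
qed

end
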